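(* For every $\alpha<1.5$ there exist reals $0<v_1<\dots<v_n$ and a distribution $\mathcal{D}$ on $\{v_1,\dots,v_n\}$ with full support such that no signaling scheme for $\mathcal{D}$ is $\alpha$-majorized.
   Context: Values and prior. $v_0:=0$, $f_{\mathcal{D}}$ is the mass function of $\mathcal{D}$, $F_{\mathcal{D}}$ its CDF, and $G_S(p)=\Pr_{v\sim S}[v\ge p]$. Signals and pricing. A signal is a distribution $S$ on $\{v_1,\dots,v_n\}$. The seller posts $p^*_S$, the smallest $v$ in the support of $S$ maximizing $v\,G_S(v)$. The surplus of value $v$ is $cs_v(S)=\mathbb{1}[v\ge p^*_S](v-p^*_S)$. Signaling schemes. A signaling scheme is $\mathcal{Z}=\{(S_q,\gamma_q)\}$ with $\gamma_q\ge0$, $\sum\gamma_q=1$ and $\sum_q\gamma_q f_{S_q}=f_{\mathcal{D}}$. Its expected consumer surplus at $v_i$ is $cs_{v_i}(\mathcal{Z})=\sum_q cs_{v_i}(S_q)\gamma_q f_{S_q}(v_i)/f_{\mathcal{D}}(v_i)$. Majorization. The surplus-mass function $s_{\mathcal{Z}}$ on $(0,1]$ equals $cs_{v_i}(\mathcal{Z})$ on $(F_{\mathcal{D}}(v_{i-1}),F_{\mathcal{D}}(v_i)]$. For a finite step function $f$ on $(0,1]$, $\mathrm{Pf}(f,m)=\int_0^m f_{\mathrm{sorted}}$, where $f_{\mathrm{sorted}}$ rearranges the steps of $f$ in ascending order. $\mathcal{Z}$ is $\alpha$-majorized if $\alpha\,\mathrm{Pf}(s_{\mathcal{Z}},m)\ge\mathrm{Pf}(s_{\mathcal{Z}'},m)$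 for every signaling scheme $\mathcal{Z}'$ for $\mathcal{D}$ and every $m\in(0,1]$. *)

theory Defs
  imports "HOL-Analysis.Analysis"
begin

text \<open>Values are v 1 < ... < v n (indices 1..n); a distribution / signal on
  the values is a mass function on the indices {1..n}.\<close>

definition is_dist :: "nat \<Rightarrow> (nat \<Rightarrow> real) \<Rightarrow> bool" where
  "is_dist n s \<longleftrightarrow> (\<forall>i\<in>{1..n}. 0 \<le> s i) \<and> (\<Sum>i\<in>{1..n}. s i) = 1"

text \<open>G_S(v_j) = Pr_{v ~ S}[v \<ge> v_j]; since values are strictly increasing this
  is the mass of indices j..n.\<close>
definition G :: "nat \<Rightarrow> (nat \<Rightarrow> real) \<Rightarrow> nat \<Rightarrow> real" where
  "G n s j = (\<Sum>i\<in>{j..n}. s i)"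

definition supp :: "nat \<Rightarrow> (nat \<Rightarrow> real) \<Rightarrow> nat set" where
  "supp n s = {i\<in>{1..n}. 0 < s i}"

definition price_idx :: "nat \<Rightarrow> (nat \<Rightarrow> real) \<Rightarrow> (nat \<Rightarrow> real) \<Rightarrow> nat" where
  "price_idx n v s = (LEAST j. j \<in> supp n s \<and>
      (\<forall>k\<in>supp n s. v k * G n s k \<le> v j * G n s j))"

definition price :: "nat \<Rightarrow> (nat \<Rightarrow> real) \<Rightarrow> (nat \<Rightarrow> real) \<Rightarrow> real" where
  "price n v s = v (price_idx n v s)"

definition cs :: "nat \<Rightarrow> (nat \<Rightarrow> real) \<Rightarrow> (nat \<Rightarrow> real) \<Rightarrow> nat \<Rightarrow> real" where
  "cs n v s i = (if price n v s \<le> v i then v i - price n v s else 0)"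

definition is_scheme :: "nat \<Rightarrow> (nat \<Rightarrow> real) \<Rightarrow> nat set \<Rightarrow> (nat \<Rightarrow> nat \<Rightarrow> real)
    \<Rightarrow> (nat \<Rightarrow> real) \<Rightarrow> bool" where
  "is_scheme n f Q S \<gamma> \<longleftrightarrow> finite Q \<and> (\<forall>q\<in>Q. 0 \<le> \<gamma> q \<and> is_dist n (S q)) \<and>
     (\<Sum>q\<in>Q. \<gamma> q) = 1 \<and> (\<forall>i\<in>{1..n}. (\<Sum>q\<in>Q. \<gamma> q * S q i) = f i)"

definition cs_scheme :: "nat \<Rightarrow> (nat \<Rightarrow> real) \<Rightarrow> (nat \<Rightarrow> real) \<Rightarrow> nat set
    \<Rightarrow> (nat \<Rightarrow> nat \<Rightarrow> real) \<Rightarrow> (nat \<Rightarrow> real) \<Rightarrow> nat \<Rightarrow> real" where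
  "cs_scheme n v f Q S \<gamma> i = (\<Sum>q\<in>Q. cs n v (S q) i * \<gamma> q * S q i / f i)"

text \<open>Step function on (0, total length] given by a list of (length, value) pieces.\<close>
fun step_fun :: "(real \<times> real) list \<Rightarrow> real \<Rightarrow> real" where
  "step_fun [] x = 0"
| "step_fun ((l, c) # ps) x = (if x \<le> l then c else step_fun ps (x - l))"

text \<open>Pf(f, m) = integral over (0, m] of the ascending rearrangement of the steps.\<close>
definition Pf :: "(real \<times> real) list \<Rightarrow> real \<Rightarrow> real" where
  "Pf ps m = integral {0..m} (step_fun (sort_key snd ps))"

definition surplus_mass :: "nat \<Rightarrow> (nat \<Rightarrow> real) \<Rightarrow> (nat \<Rightarrow> real) \<Rightarrow> nat set
    \<Rightarrow> (nat \<Rightarrow> nat \<Rightarrow> real) \<Rightarrow> (nat \<Rightarrow> real) \<Rightarrow> (real \<times> real) list" where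
  "surplus_mass n v f Q S \<gamma> = map (\<lambda>i. (f i, cs_scheme n v f Q S \<gamma> i)) [1..<n+1]"

definition alpha_majorized :: "real \<Rightarrow> nat \<Rightarrow> (nat \<Rightarrow> real) \<Rightarrow> (nat \<Rightarrow> real) \<Rightarrow> nat set
    \<Rightarrow> (nat \<Rightarrow> nat \<Rightarrow> real) \<Rightarrow> (nat \<Rightarrow> real) \<Rightarrow> bool" where
  "alpha_majorized \<alpha> n v f Q S \<gamma> \<longleftrightarrow>
     (\<forall>Q' S' \<gamma>'. is_scheme n f Q' S' \<gamma>' \<longrightarrow>
        (\<forall>m. 0 < m \<and> m \<le> 1 \<longrightarrow>
           Pf (surplus_mass n v f Q' S' \<gamma>') m \<le> \<alpha> * Pf (surplus_mass n v f Q S \<gamma>) m))"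

end

theory Submission
  imports Defs
begin

text \<open>Take values 10, 11, 15 with masses 1/41, 10/41, 30/41. The posted price is at least the
  lowest value, so the lowest value never receives surplus; let \<open>c\<^sub>2, c\<^sub>3\<close> be the
  surpluses of the other two values under a scheme. One scheme gives the middle value surplus 4/5, so majorizing it at mass 11/41 forces \<open>\<alpha> c\<^sub>2 \<ge> 4/5\<close>; another
  attains the maximal total surplus 120/41, which forces \<open>\<alpha> (10 c\<^sub>2 + 30 c\<^sub>3) \<ge> 120\<close>. Since
  the price maximizes revenue in every signal, every scheme satisfies
  \<open>160 c\<^sub>2 + 30 c\<^sub>3 \<le> 160\<close>, and the three inequalities together give \<open>\<alpha> \<ge> 3/2\<close>.\<close>

fun step_fun_integral :: "(real \<times> real) list \<Rightarrow> real \<Rightarrow> real" where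
  "step_fun_integral [] m = 0"
| "step_fun_integral ((l, c) # ps) m =
     (if m \<le> l then c * m else c * l + step_fun_integral ps (m - l))"

lemma step_fun_has_integral:
  assumes "\<forall>p\<in>set ps. 0 < fst p" "0 \<le> m"
  shows "(step_fun ps has_integral step_fun_integral ps m) {0..m}"
  using assms
proof (induction ps arbitrary: m)
  case Nil
  then show ?case by simp
next
  case (Cons p ps)
  obtain l c where p: "p = (l, c)" by fastforce
  have "0 < l" using Cons.prems p by auto
  have const: "((\<lambda>x. c) has_integral c * t) {0..t}" if "0 \<le> t" for t
    using has_integral_const_real[of c 0 t] that by (simp add: mult.commute)
  show ?case
  proof (cases "m \<le> l")
    case True
    with const[OF \<open>0 \<le> m\<close>] p show ?thesis
      by (rule_tac has_integral_eq[rotated]) auto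
  next
    case False
    have head: "(step_fun (p # ps) has_integral c * l) {0..l}"
      using const[of l] \<open>0 < l\<close> p by (rule_tac has_integral_eq[rotated]) auto
    have "(step_fun ps has_integral step_fun_integral ps (m - l)) {0..m - l}"
      using Cons False by auto
    from has_integral_shift_real_ivl[OF this, of "-l"]
    have "((\<lambda>x. step_fun ps (x - l)) has_integral step_fun_integral ps (m - l)) {l..m}"
      by simp
    then have tail: "(step_fun (p # ps) has_integral step_fun_integral ps (m - l)) {l..m}"
      by (rule has_integral_spike_finite[where S = "{l}", rotated 2]) (auto simp: p)
    have "step_fun_integral (p # ps) m = c * l + step_fun_integral ps (m - l)"
      using False p by simp
    then show ?thesis
      using has_integral_combine[OF _ _ head tail] \<open>0 < l\<close> False by simp
  qed
qed

lemma Pf_eq_step_fun_integral: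
  assumes "\<forall>p\<in>set ps. 0 < fst p" "0 \<le> m"
  shows "Pf ps m = step_fun_integral (sort_key snd ps) m"
  unfolding Pf_def using assms by (intro integral_unique step_fun_has_integral) auto

lemma supp_nonempty:
  assumes "is_dist n s"
  shows "supp n s \<noteq> {}"
proof
  assume "supp n s = {}"
  then have "\<forall>i\<in>{1..n}. s i \<le> 0"
    unfolding supp_def by auto
  then have "(\<Sum>i\<in>{1..n}. s i) \<le> 0"
    by (intro sum_nonpos) simp
  then show False using assms unfolding is_dist_def by simp
qed

lemma price_idx_maximizes_revenue:
  assumes "supp n s \<noteq> {}"
  shows "price_idx n v s \<in> supp n s \<and>
    (\<forall>k\<in>supp n s. v k * G n s k \<le> v (price_idx n v s) * G n s (price_idx n v s))"
proof -
  let ?rev = "\<lambda>k. v k * G n s k"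
  have fin: "finite (?rev ` supp n s)" unfolding supp_def by simp
  obtain j where "j \<in> supp n s" "Max (?rev ` supp n s) = ?rev j"
    using Max_in[OF fin] assms by auto
  moreover have "\<forall>k\<in>supp n s. ?rev k \<le> Max (?rev ` supp n s)"
    using Max_ge[OF fin] by blast
  ultimately have "j \<in> supp n s \<and> (\<forall>k\<in>supp n s. ?rev k \<le> ?rev j)"
    by simp
  then show ?thesis
    unfolding price_idx_def by (rule LeastI)
qed

lemma price_idx_eqI:
  assumes "j \<in> supp n s"
    and "\<And>k. k \<in> supp n s \<Longrightarrow> v k * G n s k \<le> v j * G n s j"
    and "\<And>k. k \<in> supp n s \<Longrightarrow> k < j \<Longrightarrow> v k * G n s k < v j * G n s j"
  shows "price_idx n v s = j"
  unfolding price_idx_def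
proof (rule Least_equality)
  fix i assume i: "i \<in> supp n s \<and> (\<forall>k\<in>supp n s. v k * G n s k \<le> v i * G n s i)"
  show "j \<le> i"
  proof (rule ccontr)
    assume "\<not> j \<le> i"
    then have "v i * G n s i < v j * G n s j" using assms(3) i by simp
    moreover have "v j * G n s j \<le> v i * G n s i" using i assms(1) by blast
    ultimately show False by simp
  qed
next
  show "j \<in> supp n s \<and> (\<forall>k\<in>supp n s. v k * G n s k \<le> v j * G n s j)"
    using assms(1,2) by simp
qed

lemma G_nonneg: "is_dist n s \<Longrightarrow> 1 \<le> k \<Longrightarrow> 0 \<le> G n s k"
  unfolding G_def is_dist_def by (intro sum_nonneg) auto

lemma G_eq_Suc: "k \<le> n \<Longrightarrow> G n s k = s k + G n s (Suc k)"
  unfolding G_def by (rule sum.atLeast_Suc_atMost)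

lemma price_idx_in_values: "is_dist n s \<Longrightarrow> price_idx n v s \<in> {1..n}"
  using price_idx_maximizes_revenue[OF supp_nonempty] unfolding supp_def by blast

text \<open>A value outside the support earns at most the revenue of the next larger value, so
  the posted price maximizes revenue among all values, not only those in the support.\<close>
lemma revenue_le_price_revenue:
  assumes dist: "is_dist n s" and mono: "mono_on {1..n} v" and "0 \<le> v 1"
    and k: "k \<in> {1..n}"
  shows "v k * G n s k \<le> price n v s * G n s (price_idx n v s)"
proof -
  let ?R = "price n v s * G n s (price_idx n v s)"
  have j: "price_idx n v s \<in> {1..n}" using price_idx_in_values[OF dist] .
  have "0 \<le> ?R"
    using j mono_onD[OF mono, of 1 "price_idx n v s"] \<open>0 \<le> v 1\<close> G_nonneg[OF dist]
    unfolding price_def by (intro mult_nonneg_nonneg) auto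
  have in_supp_or_null: "k \<in> supp n s \<or> s k = 0" if "k \<in> {1..n}" for k
    using dist that unfolding supp_def is_dist_def by force
  have bound_in_supp: "v k * G n s k \<le> ?R" if "k \<in> supp n s" for k
    using price_idx_maximizes_revenue[OF supp_nonempty[OF dist]] that
    unfolding price_def by blast
  from k have "k \<le> n" by simp
  then show ?thesis using k
  proof (induction k rule: inc_induct)
    case base
    have "s n = 0 \<Longrightarrow> G n s n = 0" unfolding G_def by simp
    then show ?case using in_supp_or_null[OF base] bound_in_supp \<open>0 \<le> ?R\<close> by auto
  next
    case (step k)
    have "v k * G n s (Suc k) \<le> v (Suc k) * G n s (Suc k)"
      using step.hyps step.prems mono_onD[OF mono, of k "Suc k"] G_nonneg[OF dist, of "Suc k"]
      by (intro mult_right_mono) auto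
    with step show ?case
      using in_supp_or_null[OF step.prems] bound_in_supp G_eq_Suc[of k n s] by fastforce
  qed
qed

lemma cs_nonneg: "0 \<le> cs n v s i"
  unfolding cs_def by simp

lemma cs_lowest_value_eq_0:
  assumes "is_dist n s" "mono_on {1..n} v"
  shows "cs n v s 1 = 0"
proof -
  have "v 1 \<le> price n v s"
    using price_idx_in_values[OF assms(1)] mono_onD[OF assms(2), of 1] unfolding price_def by auto
  then show ?thesis unfolding cs_def by simp
qed

lemma cs_scheme_nonneg:
  assumes "is_scheme n f Q S \<gamma>" "i \<in> {1..n}" "0 \<le> f i"
  shows "0 \<le> cs_scheme n v f Q S \<gamma> i"
  using assms cs_nonneg unfolding cs_scheme_def is_scheme_def is_dist_def
  by (auto intro!: sum_nonneg)

lemma cs_scheme_lowest_value_eq_0: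
  assumes "is_scheme n f Q S \<gamma>" "mono_on {1..n} v"
  shows "cs_scheme n v f Q S \<gamma> 1 = 0"
  using assms cs_lowest_value_eq_0 unfolding cs_scheme_def is_scheme_def by simp

lemma mass_times_cs_scheme:
  assumes "f i \<noteq> 0"
  shows "f i * cs_scheme n v f Q S \<gamma> i = (\<Sum>q\<in>Q. \<gamma> q * (S q i * cs n v (S q) i))"
  using assms unfolding cs_scheme_def sum_distrib_left
  by (intro sum.cong) (simp_all add: field_simps)

text \<open>The masses and mass-weighted surpluses of a scheme are \<open>\<gamma>\<close>-averages of those of its
  signals, so linear inequalities between them pass from signals to schemes.\<close>
lemma cs_scheme_weighted_le:
  assumes scheme: "is_scheme n f Q S \<gamma>" and f: "\<forall>i\<in>{1..n}. f i \<noteq> 0"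
    and signal: "\<And>s. is_dist n s \<Longrightarrow>
      (\<Sum>i=1..n. a i * (s i * cs n v s i)) \<le> (\<Sum>i=1..n. b i * s i)"
  shows "(\<Sum>i=1..n. a i * (f i * cs_scheme n v f Q S \<gamma> i)) \<le> (\<Sum>i=1..n. b i * f i)"
proof -
  have \<gamma>: "\<forall>q\<in>Q. 0 \<le> \<gamma> q \<and> is_dist n (S q)"
    and marginal: "\<forall>i\<in>{1..n}. (\<Sum>q\<in>Q. \<gamma> q * S q i) = f i"
    using scheme unfolding is_scheme_def by auto
  have "(\<Sum>i=1..n. a i * (f i * cs_scheme n v f Q S \<gamma> i))
      = (\<Sum>q\<in>Q. \<gamma> q * (\<Sum>i=1..n. a i * (S q i * cs n v (S q) i)))"
    using f by (simp add: mass_times_cs_scheme sum_distrib_left sum.swap[of _ Q] algebra_simps)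
  also have "\<dots> \<le> (\<Sum>q\<in>Q. \<gamma> q * (\<Sum>i=1..n. b i * S q i))"
    using \<gamma> signal by (intro sum_mono[where K = Q] mult_left_mono) auto
  also have "\<dots> = (\<Sum>i=1..n. b i * (\<Sum>q\<in>Q. \<gamma> q * S q i))"
    unfolding sum_distrib_left by (subst sum.swap) (simp add: mult.left_commute)
  also have "\<dots> = (\<Sum>i=1..n. b i * f i)"
    using marginal by simp
  finally show ?thesis .
qed

definition triple :: "real \<Rightarrow> real \<Rightarrow> real \<Rightarrow> nat \<Rightarrow> real" where
  "triple a b c i = (if i = 1 then a else if i = 2 then b else if i = 3 then c else 0)"

lemma atLeastAtMost_1_3: "{1..3::nat} = {1, 2, 3}"
  by auto

text \<open>This and \<open>G_3\<close> are stated at \<open>Suc 0\<close>, the simp normal form of \<open>1 :: nat\<close> (\<open>One_nat_def\<close>).\<close>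
lemma triple_simps [simp]: "triple a b c (Suc 0) = a" "triple a b c 2 = b" "triple a b c 3 = c"
  by (simp_all add: triple_def)

lemma G_3 [simp]:
  "G 3 s (Suc 0) = s (Suc 0) + s 2 + s 3" "G 3 s 2 = s 2 + s 3" "G 3 s 3 = s 3"
proof -
  have "{2..3::nat} = {2, 3}" by auto
  then show "G 3 s (Suc 0) = s (Suc 0) + s 2 + s 3" "G 3 s 2 = s 2 + s 3" "G 3 s 3 = s 3"
    unfolding G_def atLeastAtMost_1_3[unfolded One_nat_def] by simp_all
qed

lemma supp_3: "supp 3 s = {k \<in> {1, 2, 3}. 0 < s k}"
  unfolding supp_def atLeastAtMost_1_3 ..

lemma is_dist_triple: "is_dist 3 (triple a b c) \<longleftrightarrow> 0 \<le> a \<and> 0 \<le> b \<and> 0 \<le> c \<and> a + b + c = 1"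
  unfolding is_dist_def atLeastAtMost_1_3 by auto

abbreviation hard_val :: "nat \<Rightarrow> real" where
  "hard_val \<equiv> triple 10 11 15"

abbreviation hard_prior :: "nat \<Rightarrow> real" where
  "hard_prior \<equiv> triple (1/41) (10/41) (30/41)"

lemma mono_on_hard_val: "mono_on {1..3} hard_val"
  unfolding mono_on_def triple_def by auto

text \<open>The weights 16 : 1 are those of the combination 15 \<times> (prefix bound) + (total bound) taken
  in \<open>hard_majorized_imp_ge\<close>.\<close>
lemma hard_signal_surplus_le:
  assumes dist: "is_dist 3 s"
  shows "16 * (s 2 * cs 3 hard_val s 2) + s 3 * cs 3 hard_val s 3 \<le> 50 * s 1 + 11 * s 2"
proof -
  let ?j = "price_idx 3 hard_val s"
  have nonneg: "0 \<le> s 1" "0 \<le> s 2" "0 \<le> s 3"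
    using dist unfolding is_dist_def by auto
  have rev: "hard_val k * G 3 s k \<le> hard_val ?j * G 3 s ?j" if "k \<in> {1, 2, 3}" for k
    using revenue_le_price_revenue[OF dist mono_on_hard_val, of k] that
    unfolding price_def by auto
  have "?j \<in> {1, 2, 3}"
    using price_idx_in_values[OF dist] unfolding atLeastAtMost_1_3 .
  then consider "?j = 1" | "?j = 2" | "?j = 3" by blast
  then show ?thesis
  proof cases
    case 1
    have "11 * (s 2 + s 3) \<le> 10 * (s 1 + s 2 + s 3)" using rev[of 2] 1 by simp
    then show ?thesis using nonneg unfolding cs_def price_def 1 by simp
  next
    case 2
    have "15 * s 3 \<le> 11 * (s 2 + s 3)" using rev[of 3] 2 by simp
    then show ?thesis using nonneg unfolding cs_def price_def 2 by simp
  next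
    case 3
    then show ?thesis using nonneg unfolding cs_def price_def 3 by simp
  qed
qed

lemma hard_scheme_surplus_le:
  assumes "is_scheme 3 hard_prior Q S \<gamma>"
  shows "160 * cs_scheme 3 hard_val hard_prior Q S \<gamma> 2
      + 30 * cs_scheme 3 hard_val hard_prior Q S \<gamma> 3 \<le> 160"
proof -
  have "(\<Sum>i=1..3. triple 0 16 1 i * (hard_prior i * cs_scheme 3 hard_val hard_prior Q S \<gamma> i))
      \<le> (\<Sum>i=1..3. triple 50 11 0 i * hard_prior i)"
  proof (rule cs_scheme_weighted_le[OF assms])
    show "\<forall>i\<in>{1..3}. hard_prior i \<noteq> 0" unfolding atLeastAtMost_1_3 by simp
    show "(\<Sum>i=1..3. triple 0 16 1 i * (s i * cs 3 hard_val s i)) \<le> (\<Sum>i=1..3. triple 50 11 0 i * s i)"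
      if "is_dist 3 s" for s
      using hard_signal_surplus_le[OF that] unfolding atLeastAtMost_1_3 by simp
  qed
  then show ?thesis unfolding atLeastAtMost_1_3 by simp
qed

lemma hard_surplus_mass:
  assumes "is_scheme 3 hard_prior Q S \<gamma>"
  shows "surplus_mass 3 hard_val hard_prior Q S \<gamma> =
    [(1/41, 0), (10/41, cs_scheme 3 hard_val hard_prior Q S \<gamma> 2),
     (30/41, cs_scheme 3 hard_val hard_prior Q S \<gamma> 3)]"
proof -
  have "[1..<3 + 1] = [1, 2, 3::nat]" by (simp add: upt_rec)
  then show ?thesis
    using cs_scheme_lowest_value_eq_0[OF assms mono_on_hard_val] by (simp add: surplus_mass_def)
qed

lemma Pf_hard_pieces:
  assumes "0 \<le> c\<^sub>2" "0 \<le> c\<^sub>3"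
  shows "Pf [(1/41, 0), (10/41, c\<^sub>2), (30/41, c\<^sub>3)] (11/41) = 10/41 * min c\<^sub>2 c\<^sub>3"
    and "Pf [(1/41, 0), (10/41, c\<^sub>2), (30/41, c\<^sub>3)] 1 = 10/41 * c\<^sub>2 + 30/41 * c\<^sub>3"
  using assms by (simp_all add: Pf_eq_step_fun_integral)

definition balanced_signals :: "nat \<Rightarrow> nat \<Rightarrow> real" where
  "balanced_signals = (!) [triple (1/11) (8/11) (2/11), triple 0 (4/15) (11/15), triple 0 0 1]"

definition balanced_weights :: "nat \<Rightarrow> real" where
  "balanced_weights = (!) [11/41, 15/82, 45/82]"

text \<open>The surplus-maximizing scheme of Bergemann, Brooks and Morris: in every signal the uniform
  monopoly price 15 stays optimal and every value buys, so consumers get \<open>E[v] - 450/41 = 120/41\<close>,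
  the most any scheme can give.\<close>
definition max_surplus_signals :: "nat \<Rightarrow> nat \<Rightarrow> real" where
  "max_surplus_signals = (!) [triple (1/3) 0 (2/3), triple 0 (4/15) (11/15), triple 0 0 1]"

definition max_surplus_weights :: "nat \<Rightarrow> real" where
  "max_surplus_weights = (!) [3/41, 75/82, 1/82]"

lemma price_hard_signals:
  "price 3 hard_val (triple (1/11) (8/11) (2/11)) = 10"
  "price 3 hard_val (triple (1/3) 0 (2/3)) = 10"
  "price 3 hard_val (triple 0 (4/15) (11/15)) = 11"
  "price 3 hard_val (triple 0 0 1) = 15"
proof -
  have "price_idx 3 hard_val (triple (1/11) (8/11) (2/11)) = 1"
    "price_idx 3 hard_val (triple (1/3) 0 (2/3)) = 1"
    "price_idx 3 hard_val (triple 0 (4/15) (11/15)) = 2"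
    "price_idx 3 hard_val (triple 0 0 1) = 3"
    by (rule price_idx_eqI; auto simp: supp_3)+
  then show "price 3 hard_val (triple (1/11) (8/11) (2/11)) = 10"
    "price 3 hard_val (triple (1/3) 0 (2/3)) = 10"
    "price 3 hard_val (triple 0 (4/15) (11/15)) = 11"
    "price 3 hard_val (triple 0 0 1) = 15"
    unfolding price_def by simp_all
qed

lemma balanced_scheme: "is_scheme 3 hard_prior {0, 1, 2} balanced_signals balanced_weights"
  unfolding is_scheme_def balanced_signals_def balanced_weights_def atLeastAtMost_1_3
  by (simp add: is_dist_triple)

lemma max_surplus_scheme: "is_scheme 3 hard_prior {0, 1, 2} max_surplus_signals max_surplus_weights"
  unfolding is_scheme_def max_surplus_signals_def max_surplus_weights_def atLeastAtMost_1_3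
  by (simp add: is_dist_triple)

lemma Pf_balanced_scheme:
  "Pf (surplus_mass 3 hard_val hard_prior {0, 1, 2} balanced_signals balanced_weights) (11/41) = 8/41"
proof -
  have "cs_scheme 3 hard_val hard_prior {0, 1, 2} balanced_signals balanced_weights 2 = 4/5"
    "cs_scheme 3 hard_val hard_prior {0, 1, 2} balanced_signals balanced_weights 3 = 16/15"
    unfolding cs_scheme_def balanced_signals_def balanced_weights_def
    by (simp_all add: cs_def price_hard_signals)
  then show ?thesis
    unfolding hard_surplus_mass[OF balanced_scheme] by (simp add: Pf_hard_pieces)
qed

lemma Pf_max_surplus_scheme:
  "Pf (surplus_mass 3 hard_val hard_prior {0, 1, 2} max_surplus_signals max_surplus_weights) 1 = 120/41"
proof -
  have "cs_scheme 3 hard_val hard_prior {0, 1, 2} max_surplus_signals max_surplus_weights 2 = 0"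
    "cs_scheme 3 hard_val hard_prior {0, 1, 2} max_surplus_signals max_surplus_weights 3 = 4"
    unfolding cs_scheme_def max_surplus_signals_def max_surplus_weights_def
    by (simp_all add: cs_def price_hard_signals)
  then show ?thesis
    unfolding hard_surplus_mass[OF max_surplus_scheme] by (simp add: Pf_hard_pieces)
qed

lemma hard_majorized_imp_ge:
  assumes scheme: "is_scheme 3 hard_prior Q S \<gamma>"
    and majorized: "alpha_majorized \<alpha> 3 hard_val hard_prior Q S \<gamma>"
  shows "3/2 \<le> \<alpha>"
proof -
  define c\<^sub>2 where "c\<^sub>2 = cs_scheme 3 hard_val hard_prior Q S \<gamma> 2"
  define c\<^sub>3 where "c\<^sub>3 = cs_scheme 3 hard_val hard_prior Q S \<gamma> 3"
  have "0 \<le> c\<^sub>2" "0 \<le> c\<^sub>3"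
    unfolding c\<^sub>2_def c\<^sub>3_def using cs_scheme_nonneg[OF scheme] by simp_all
  have "surplus_mass 3 hard_val hard_prior Q S \<gamma> = [(1/41, 0), (10/41, c\<^sub>2), (30/41, c\<^sub>3)]"
    unfolding c\<^sub>2_def c\<^sub>3_def by (rule hard_surplus_mass[OF scheme])
  note Pf_Z = Pf_hard_pieces[OF \<open>0 \<le> c\<^sub>2\<close> \<open>0 \<le> c\<^sub>3\<close>, folded this]
  have budget: "160 * c\<^sub>2 + 30 * c\<^sub>3 \<le> 160"
    unfolding c\<^sub>2_def c\<^sub>3_def by (rule hard_scheme_surplus_le[OF scheme])
  have dominates: "Pf (surplus_mass 3 hard_val hard_prior Q' S' \<gamma>') m
      \<le> \<alpha> * Pf (surplus_mass 3 hard_val hard_prior Q S \<gamma>) m"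
    if "is_scheme 3 hard_prior Q' S' \<gamma>'" "0 < m" "m \<le> 1" for Q' S' \<gamma>' m
    using majorized that unfolding alpha_majorized_def by blast
  have prefix: "8/41 \<le> \<alpha> * (10/41 * min c\<^sub>2 c\<^sub>3)"
    using dominates[OF balanced_scheme, of "11/41"] unfolding Pf_balanced_scheme Pf_Z(1) by simp
  have total: "120/41 \<le> \<alpha> * (10/41 * c\<^sub>2 + 30/41 * c\<^sub>3)"
    using dominates[OF max_surplus_scheme, of 1] unfolding Pf_max_surplus_scheme Pf_Z(2) by simp
  have "0 \<le> \<alpha>"
  proof (rule ccontr)
    assume "\<not> 0 \<le> \<alpha>"
    then have "\<alpha> * (10/41 * min c\<^sub>2 c\<^sub>3) \<le> 0"
      using \<open>0 \<le> c\<^sub>2\<close> \<open>0 \<le> c\<^sub>3\<close> by (intro mult_nonpos_nonneg) auto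
    with prefix show False by simp
  qed
  then have "8/41 \<le> 10/41 * (\<alpha> * c\<^sub>2)"
    using prefix mult_left_mono[OF min.cobounded1, of \<alpha> c\<^sub>2 c\<^sub>3] by simp
  moreover have "160 * (\<alpha> * c\<^sub>2) + 30 * (\<alpha> * c\<^sub>3) \<le> 160 * \<alpha>"
    using mult_left_mono[OF budget \<open>0 \<le> \<alpha>\<close>] by (simp add: algebra_simps)
  ultimately show ?thesis
    using total by (simp add: algebra_simps)
qed

theorem theorem4:
  fixes \<alpha> :: real
  assumes "\<alpha> < 1.5"
  shows "\<exists>(n::nat) (v::nat \<Rightarrow> real) (f::nat \<Rightarrow> real).
           0 < v 1 \<and> (\<forall>i\<in>{1..n}. \<forall>j\<in>{1..n}. i < j \<longrightarrow> v i < v j) \<and>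
           is_dist n f \<and> (\<forall>i\<in>{1..n}. 0 < f i) \<and>
           \<not> (\<exists>Q S \<gamma>. is_scheme n f Q S \<gamma> \<and> alpha_majorized \<alpha> n v f Q S \<gamma>)"
proof -
  have "0 < hard_val 1" "\<forall>i\<in>{1..3}. \<forall>j\<in>{1..3}. i < j \<longrightarrow> hard_val i < hard_val j"
    unfolding atLeastAtMost_1_3 by auto
  moreover have "is_dist 3 hard_prior" "\<forall>i\<in>{1..3}. 0 < hard_prior i"
    unfolding is_dist_triple atLeastAtMost_1_3 by auto
  moreover have "\<not> (\<exists>Q S \<gamma>. is_scheme 3 hard_prior Q S \<gamma> \<and>
      alpha_majorized \<alpha> 3 hard_val hard_prior Q S \<gamma>)"
    using hard_majorized_imp_ge assms by fastforce
  ultimately show ?thesis by blast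
qed

end
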